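(* Let $\mathfrak g$ be a Lie algebra, $(\mathfrak k,\pi)$ a $\mathfrak g$-Lie algebra (write $\xi\cdot x=\pi(\xi)x$), $r_\pm:\mathfrak k\to\mathfrak g$ linear maps, $\lambda\in\mathbb R$, $r=(r_++r_-)/2$, $\beta=(r_+-r_-)/2$. Suppose $\beta$ is antisymmetric of mass $\nu\neq0$, $\mathfrak g$-invariant of mass $\kappa\neq0$ and equivalent of mass $\lambda$. Then: (i) for each sign, the bracket $[x,y]_\pm:=\lambda[x,y]_{\mathfrak k}\pm2\beta(x)\cdot y$ is a Lie bracket on the vector space $\mathfrak k$, and with it $(\mathfrak k_\pm,\pi)$ is a $\mathfrak g$-Lie algebra; (ii) for each sign, $r$ is an extended $\mathcal O$-operator of weight $\lambda$ with extension $\beta$ of mass $(\nu,-1,\pm\lambda)$ (for $\nu\neq 0$) if and only if $r_\pm:\mathfrak k_\mp\to\mathfrak g$ is an $\mathcal O$-operator of weight $1$, where $\mathfrak k_\mp$ carries the bracket $[\,,\,]_\mp$.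
   Context: All spaces are finite-dimensional real. A $\mathfrak g$-Lie algebra $(\mathfrak k,\pi)$ is a Lie algebra $(\mathfrak k,[\,,\,]_{\mathfrak k})$ with a Lie algebra homomorphism $\pi:\mathfrak g\to\mathrm{Der}(\mathfrak k)$. For constants $\nu,\kappa,\mu$, a linear map $\beta:\mathfrak k\to\mathfrak g$ is: antisymmetric of mass $\nu$ if $\nu(\beta(x)\cdot y+\beta(y)\cdot x)=0$; $\mathfrak g$-invariant of mass $\kappa$ if $\kappa\beta(\xi\cdot x)=\kappa[\xi,\beta(x)]_{\mathfrak g}$; equivalent of mass $\mu$ if $\mu\beta([x,y]_{\mathfrak k})\cdot z=\mu[\beta(x)\cdot y,z]_{\mathfrak k}$ (for all $x,y,z\in\mathfrak k,\xi\in\mathfrak g$). Given such $\beta$, $r:\mathfrak k\to\mathfrak g$ is an extended $\mathcal O$-operator of weight $\lambda$ with extension $\beta$ of mass $(\nu,\kappa,\mu)$ if $[r(x),r(y)]_{\mathfrak g}-r(r(x)\cdot y-r(y)\cdot x+\lambda[x,y]_{\mathfrak k})=\kappa[\beta(x),\beta(y)]_{\mathfrak g}+\mu\beta([x,y]_{\mathfrak k})$ for all $x,y$. If $(\mathfrak k,\pi)$ is a $\mathfrak g$-Lie algebra with bracket $[\,,\,]$, a linear map $T:\mathfrak k\to\mathfrak g$ is an $\mathcal O$-operator of weight $\lambda$ if $[T(x),T(y)]_{\mathfrak g}=T(T(x)\cdot y-T(y)\cdot x+\lambda[x,y])$ for all $x,y$. *)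

theory Defs
  imports "HOL-Analysis.Analysis"
begin

text \<open>All spaces are finite-dimensional real vector spaces; we model them by
types of class euclidean_space. A Lie bracket is a bilinear, alternating map
satisfying the Jacobi identity.\<close>

definition lie_algebra :: "('a::real_vector \<Rightarrow> 'a \<Rightarrow> 'a) \<Rightarrow> bool" where
  "lie_algebra B \<longleftrightarrow>
     (\<forall>x. linear (B x)) \<and> (\<forall>y. linear (\<lambda>x. B x y)) \<and>
     (\<forall>x. B x x = 0) \<and>
     (\<forall>x y z. B x (B y z) + B y (B z x) + B z (B x y) = 0)"

definition derivation :: "('a::real_vector \<Rightarrow> 'a \<Rightarrow> 'a) \<Rightarrow> ('a \<Rightarrow> 'a) \<Rightarrow> bool" where
  "derivation B D \<longleftrightarrow> linear D \<and> (\<forall>x y. D (B x y) = B (D x) y + B x (D y))"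

definition g_lie_algebra ::
  "('g::real_vector \<Rightarrow> 'g \<Rightarrow> 'g) \<Rightarrow> ('k::real_vector \<Rightarrow> 'k \<Rightarrow> 'k) \<Rightarrow> ('g \<Rightarrow> 'k \<Rightarrow> 'k) \<Rightarrow> bool" where
  "g_lie_algebra Bg Bk \<pi> \<longleftrightarrow>
     lie_algebra Bk \<and> (\<forall>x. linear (\<lambda>\<xi>. \<pi> \<xi> x)) \<and> (\<forall>\<xi>. derivation Bk (\<pi> \<xi>)) \<and>
     (\<forall>\<xi> \<eta> x. \<pi> (Bg \<xi> \<eta>) x = \<pi> \<xi> (\<pi> \<eta> x) - \<pi> \<eta> (\<pi> \<xi> x))"

definition antisymmetric_mass ::
  "('g \<Rightarrow> 'k \<Rightarrow> 'k::real_vector) \<Rightarrow> ('k \<Rightarrow> 'g) \<Rightarrow> real \<Rightarrow> bool" where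
  "antisymmetric_mass \<pi> \<beta> \<nu> \<longleftrightarrow> (\<forall>x y. \<nu> *\<^sub>R (\<pi> (\<beta> x) y + \<pi> (\<beta> y) x) = 0)"

definition invariant_mass ::
  "('g::real_vector \<Rightarrow> 'g \<Rightarrow> 'g) \<Rightarrow> ('g \<Rightarrow> 'k \<Rightarrow> 'k) \<Rightarrow> ('k \<Rightarrow> 'g) \<Rightarrow> real \<Rightarrow> bool" where
  "invariant_mass Bg \<pi> \<beta> \<kappa> \<longleftrightarrow> (\<forall>\<xi> x. \<kappa> *\<^sub>R \<beta> (\<pi> \<xi> x) = \<kappa> *\<^sub>R Bg \<xi> (\<beta> x))"

definition equivalent_mass ::
  "('k::real_vector \<Rightarrow> 'k \<Rightarrow> 'k) \<Rightarrow> ('g \<Rightarrow> 'k \<Rightarrow> 'k) \<Rightarrow> ('k \<Rightarrow> 'g) \<Rightarrow> real \<Rightarrow> bool" where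
  "equivalent_mass Bk \<pi> \<beta> \<mu> \<longleftrightarrow>
     (\<forall>x y z. \<mu> *\<^sub>R \<pi> (\<beta> (Bk x y)) z = \<mu> *\<^sub>R Bk (\<pi> (\<beta> x) y) z)"

definition ext_O_operator ::
  "('g::real_vector \<Rightarrow> 'g \<Rightarrow> 'g) \<Rightarrow> ('k::real_vector \<Rightarrow> 'k \<Rightarrow> 'k) \<Rightarrow> ('g \<Rightarrow> 'k \<Rightarrow> 'k)
    \<Rightarrow> real \<Rightarrow> ('k \<Rightarrow> 'g) \<Rightarrow> real \<Rightarrow> real \<Rightarrow> real \<Rightarrow> ('k \<Rightarrow> 'g) \<Rightarrow> bool" where
  "ext_O_operator Bg Bk \<pi> lam \<beta> \<nu> \<kappa> \<mu> r \<longleftrightarrow>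
     linear r \<and> linear \<beta> \<and>
     antisymmetric_mass \<pi> \<beta> \<nu> \<and> invariant_mass Bg \<pi> \<beta> \<kappa> \<and> equivalent_mass Bk \<pi> \<beta> \<mu> \<and>
     (\<forall>x y. Bg (r x) (r y) - r (\<pi> (r x) y - \<pi> (r y) x + lam *\<^sub>R Bk x y)
            = \<kappa> *\<^sub>R Bg (\<beta> x) (\<beta> y) + \<mu> *\<^sub>R \<beta> (Bk x y))"

definition O_operator ::
  "('g::real_vector \<Rightarrow> 'g \<Rightarrow> 'g) \<Rightarrow> ('k::real_vector \<Rightarrow> 'k \<Rightarrow> 'k) \<Rightarrow> ('g \<Rightarrow> 'k \<Rightarrow> 'k)
    \<Rightarrow> real \<Rightarrow> ('k \<Rightarrow> 'g) \<Rightarrow> bool" where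
  "O_operator Bg Bk \<pi> lam T \<longleftrightarrow>
     linear T \<and>
     (\<forall>x y. Bg (T x) (T y) = T (\<pi> (T x) y - \<pi> (T y) x + lam *\<^sub>R Bk x y))"

text \<open>The brackets [x,y]_+ (s = 1) and [x,y]_- (s = -1):
  lam [x,y]_k + 2 s beta(x).y\<close>
definition pm_bracket ::
  "('k::real_vector \<Rightarrow> 'k \<Rightarrow> 'k) \<Rightarrow> ('g \<Rightarrow> 'k \<Rightarrow> 'k) \<Rightarrow> ('k \<Rightarrow> 'g) \<Rightarrow> real \<Rightarrow> real
     \<Rightarrow> 'k \<Rightarrow> 'k \<Rightarrow> 'k" where
  "pm_bracket Bk \<pi> \<beta> lam s x y = lam *\<^sub>R Bk x y + (2 * s) *\<^sub>R \<pi> (\<beta> x) y"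

end

theory Submission
  imports Defs
begin

(* With nonzero masses, the hypotheses on beta say exactly that
     (A) beta(x).y = - beta(y).x,   (I) beta(xi.x) = [xi, beta x],
     (E) lam beta([x,y]).z = lam [beta(x).y, z].
   In the locale beta_twist we show, for every sign s, that
   [x,y]_s = lam [x,y] + 2s beta(x).y is again a g-Lie algebra bracket: its
   Jacobiator splits into lam^2 times the Jacobiator of k, 2 s lam times a
   "mixed" cyclic sum killed by (A) and (E), and 4 s^2 times the cyclic sum of
   beta(x).(beta(y).z), killed by (A), (I) and the homomorphism property of pi.
   Then for T = r + t beta with t^2 = 1 the O-operator identity of weight 1
   for T on (k, [,]_{-t}) is rewritten into the extended O-operator identity for
   r with masses (-1, t lam). *)

text \<open>A Lie bracket is skew-symmetric (polarisation of B x x = 0).\<close>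
lemma lie_algebra_skew:
  assumes "lie_algebra B"
  shows "B u v = - B v u"
proof -
  have l1: "\<And>x. linear (B x)" and l2: "\<And>y. linear (\<lambda>x. B x y)" and al: "\<And>x. B x x = 0"
    using assms by (auto simp: lie_algebra_def)
  have "B (u + v) (u + v) = B u u + B u v + B v u + B v v"
    using linear_add[OF l1] linear_add[OF l2, simplified] by simp
  then show ?thesis using al by (simp add: eq_neg_iff_add_eq_0)
qed

lemma antisymmetric_mass_nonzero:
  assumes "\<nu> \<noteq> 0"
  shows "antisymmetric_mass \<pi> \<beta> \<nu> \<longleftrightarrow> (\<forall>x y. \<pi> (\<beta> x) y = - \<pi> (\<beta> y) x)"
  using assms by (simp add: antisymmetric_mass_def eq_neg_iff_add_eq_0)

lemma invariant_mass_nonzero: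
  assumes "\<kappa> \<noteq> 0"
  shows "invariant_mass Bg \<pi> \<beta> \<kappa> \<longleftrightarrow> (\<forall>\<xi> x. \<beta> (\<pi> \<xi> x) = Bg \<xi> (\<beta> x))"
  using assms by (simp add: invariant_mass_def)

lemma equivalent_mass_uminus:
  "equivalent_mass Bk \<pi> \<beta> (- \<mu>) \<longleftrightarrow> equivalent_mass Bk \<pi> \<beta> \<mu>"
  by (simp add: equivalent_mass_def)


locale beta_twist =
  fixes Bg :: "'g::real_vector \<Rightarrow> 'g \<Rightarrow> 'g"
    and Bk :: "'k::real_vector \<Rightarrow> 'k \<Rightarrow> 'k"
    and \<pi> :: "'g \<Rightarrow> 'k \<Rightarrow> 'k"
    and \<beta> :: "'k \<Rightarrow> 'g"
    and lam :: real
  assumes lie_g: "lie_algebra Bg"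
    and g_lie_k: "g_lie_algebra Bg Bk \<pi>"
    and linear_beta: "linear \<beta>"
    and beta_antisym: "\<And>x y. \<pi> (\<beta> x) y = - \<pi> (\<beta> y) x"
    and beta_invariant: "\<And>\<xi> x. \<beta> (\<pi> \<xi> x) = Bg \<xi> (\<beta> x)"
    and beta_equivalent: "\<And>x y z. lam *\<^sub>R \<pi> (\<beta> (Bk x y)) z = lam *\<^sub>R Bk (\<pi> (\<beta> x) y) z"
begin

lemma lie_k: "lie_algebra Bk"
  using g_lie_k by (simp add: g_lie_algebra_def)

lemma pi_hom: "\<pi> (Bg \<xi> \<eta>) x = \<pi> \<xi> (\<pi> \<eta> x) - \<pi> \<eta> (\<pi> \<xi> x)"
  using g_lie_k by (simp add: g_lie_algebra_def)

lemma pi_derivation: "\<pi> \<xi> (Bk x y) = Bk (\<pi> \<xi> x) y + Bk x (\<pi> \<xi> y)"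
  using g_lie_k by (simp add: g_lie_algebra_def derivation_def)

lemma jacobi_k: "Bk x (Bk y z) + Bk y (Bk z x) + Bk z (Bk x y) = 0"
  using lie_k by (simp add: lie_algebra_def)

lemma skew_g: "Bg u v = - Bg v u"
  by (rule lie_algebra_skew[OF lie_g])

lemma skew_k: "Bk u v = - Bk v u"
  by (rule lie_algebra_skew[OF lie_k])

lemma linear_pi_left: "linear (\<lambda>\<xi>. \<pi> \<xi> x)"
  and linear_pi_right: "linear (\<pi> \<xi>)"
  and linear_Bk_right: "linear (Bk x)"
  and linear_Bk_left: "linear (\<lambda>x. Bk x y)"
  and linear_Bg_right: "linear (Bg \<xi>)"
  and linear_Bg_left: "linear (\<lambda>\<xi>. Bg \<xi> \<eta>)"
  using g_lie_k lie_k lie_g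
  by (simp_all add: g_lie_algebra_def derivation_def lie_algebra_def)

lemmas bilinear_simps =
  linear_add[OF linear_pi_left, simplified] linear_diff[OF linear_pi_left, simplified]
  linear_scale[OF linear_pi_left, simplified] linear_neg[OF linear_pi_left, simplified]
  linear_add[OF linear_pi_right] linear_diff[OF linear_pi_right]
  linear_scale[OF linear_pi_right] linear_neg[OF linear_pi_right]
  linear_add[OF linear_Bk_right] linear_diff[OF linear_Bk_right]
  linear_scale[OF linear_Bk_right] linear_neg[OF linear_Bk_right]
  linear_add[OF linear_Bk_left, simplified] linear_diff[OF linear_Bk_left, simplified]
  linear_scale[OF linear_Bk_left, simplified] linear_neg[OF linear_Bk_left, simplified]
  linear_add[OF linear_Bg_right] linear_diff[OF linear_Bg_right]
  linear_scale[OF linear_Bg_right] linear_neg[OF linear_Bg_right]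
  linear_add[OF linear_Bg_left, simplified] linear_diff[OF linear_Bg_left, simplified]
  linear_scale[OF linear_Bg_left, simplified] linear_neg[OF linear_Bg_left, simplified]
  linear_add[OF linear_beta] linear_diff[OF linear_beta]
  linear_scale[OF linear_beta] linear_neg[OF linear_beta]

abbreviation twisted :: "real \<Rightarrow> 'k \<Rightarrow> 'k \<Rightarrow> 'k" where
  "twisted s \<equiv> pm_bracket Bk \<pi> \<beta> lam s"

lemma beta_self: "\<pi> (\<beta> x) x = 0"
proof -
  have "\<pi> (\<beta> x) x + \<pi> (\<beta> x) x = 0"
    using beta_antisym[of x x] by (simp add: eq_neg_iff_add_eq_0)
  then show ?thesis by (metis scaleR_2 scaleR_eq_0_iff zero_neq_numeral)
qed

text \<open>The quadratic part of the twisted Jacobiator: the operators beta(x).\_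
  satisfy a Jacobi-type cyclic identity, by (A), (I) and pi being a homomorphism.\<close>
lemma beta_action_cyclic:
  "\<pi> (\<beta> x) (\<pi> (\<beta> y) z) + \<pi> (\<beta> y) (\<pi> (\<beta> z) x) + \<pi> (\<beta> z) (\<pi> (\<beta> x) y) = 0"
proof -
  have second: "\<pi> (\<beta> y) (\<pi> (\<beta> z) x) = - \<pi> (\<beta> y) (\<pi> (\<beta> x) z)"
    by (subst beta_antisym) (simp add: bilinear_simps)
  have third: "\<pi> (\<beta> z) (\<pi> (\<beta> x) y) = - \<pi> (Bg (\<beta> x) (\<beta> y)) z"
    by (subst beta_antisym) (simp add: beta_invariant)
  show ?thesis by (simp add: second third pi_hom)
qed

text \<open>The building block of the linear-in-beta part of the twisted Jacobiator.\<close>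
definition mixed :: "'k \<Rightarrow> 'k \<Rightarrow> 'k \<Rightarrow> 'k" where
  "mixed x y z = Bk x (\<pi> (\<beta> y) z)"

lemma beta_on_bracket: "\<pi> (\<beta> x) (Bk y z) = - mixed z x y - mixed y z x"
proof -
  have "Bk (\<pi> (\<beta> x) y) z = - mixed z x y"
    unfolding mixed_def by (rule skew_k)
  moreover have "Bk y (\<pi> (\<beta> x) z) = - mixed y z x"
    unfolding mixed_def by (simp add: beta_antisym[of x z] bilinear_simps)
  ultimately show ?thesis by (simp add: pi_derivation)
qed

text \<open>Condition (E), rewritten with (A), says that lam times the cyclic sum
  of the mixed terms vanishes.\<close>
lemma mixed_cyclic: "lam *\<^sub>R (mixed x y z + mixed y z x + mixed z x y) = 0"
proof -
  have "lam *\<^sub>R Bk (\<pi> (\<beta> y) z) x = - lam *\<^sub>R \<pi> (\<beta> x) (Bk y z)"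
    using beta_equivalent[of y z x] beta_antisym[of "Bk y z" x] by simp
  moreover have "Bk (\<pi> (\<beta> y) z) x = - mixed x y z"
    unfolding mixed_def by (rule skew_k)
  ultimately have first: "lam *\<^sub>R mixed x y z = lam *\<^sub>R (- mixed z x y - mixed y z x)"
    by (simp add: beta_on_bracket)
  have "lam *\<^sub>R (mixed x y z + mixed y z x + mixed z x y)
      = lam *\<^sub>R mixed x y z + lam *\<^sub>R mixed y z x + lam *\<^sub>R mixed z x y"
    by (simp only: scaleR_add_right)
  also have "\<dots> = 0"
    unfolding first by (simp add: algebra_simps)
  finally show ?thesis .
qed

lemma twisted_jacobi: "twisted s x (twisted s y z) + twisted s y (twisted s z x)
    + twisted s z (twisted s x y) = 0"
proof -
  have expand: "twisted s x (twisted s y z) = (lam * lam) *\<^sub>R Bk x (Bk y z)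
      + (2 * s * lam) *\<^sub>R (mixed x y z + \<pi> (\<beta> x) (Bk y z))
      + (4 * s * s) *\<^sub>R \<pi> (\<beta> x) (\<pi> (\<beta> y) z)" for x y z
    by (simp add: pm_bracket_def mixed_def bilinear_simps algebra_simps)
  have "twisted s x (twisted s y z) + twisted s y (twisted s z x) + twisted s z (twisted s x y)
      = (lam * lam) *\<^sub>R (Bk x (Bk y z) + Bk y (Bk z x) + Bk z (Bk x y))
      - (2 * s) *\<^sub>R (lam *\<^sub>R (mixed x y z + mixed y z x + mixed z x y))
      + (4 * s * s) *\<^sub>R (\<pi> (\<beta> x) (\<pi> (\<beta> y) z) + \<pi> (\<beta> y) (\<pi> (\<beta> z) x)
                          + \<pi> (\<beta> z) (\<pi> (\<beta> x) y))"
    unfolding expand beta_on_bracket by (simp add: algebra_simps)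
  then show ?thesis by (simp only: jacobi_k mixed_cyclic beta_action_cyclic) simp
qed

lemma lie_twisted: "lie_algebra (twisted s)"
  unfolding lie_algebra_def
proof (intro conjI allI)
  show "linear (twisted s x)" for x
    unfolding linear_iff pm_bracket_def by (simp add: bilinear_simps algebra_simps)
  show "linear (\<lambda>x. twisted s x y)" for y
    unfolding linear_iff pm_bracket_def by (simp add: bilinear_simps algebra_simps)
  show "twisted s x x = 0" for x
    using lie_k beta_self by (simp add: pm_bracket_def lie_algebra_def)
  show "twisted s x (twisted s y z) + twisted s y (twisted s z x) + twisted s z (twisted s x y) = 0"
    for x y z by (rule twisted_jacobi)
qed

lemma g_lie_twisted: "g_lie_algebra Bg (twisted s) \<pi>"
proof -
  have "derivation (twisted s) (\<pi> \<xi>)" for \<xi>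
    unfolding derivation_def
    by (simp add: linear_pi_right pm_bracket_def bilinear_simps pi_derivation
        beta_invariant pi_hom algebra_simps)
  then show ?thesis
    using lie_twisted linear_pi_left pi_hom by (simp add: g_lie_algebra_def)
qed

lemma O_identity_shifted:
  assumes T: "\<And>x. T x = r x + t *\<^sub>R \<beta> x" and linear_r: "linear r" and t: "t * t = 1"
  shows "Bg (T x) (T y) = T (\<pi> (T x) y - \<pi> (T y) x + 1 *\<^sub>R twisted (-t) x y)
     \<longleftrightarrow> Bg (r x) (r y) - r (\<pi> (r x) y - \<pi> (r y) x + lam *\<^sub>R Bk x y)
           = (-1) *\<^sub>R Bg (\<beta> x) (\<beta> y) + (t * lam) *\<^sub>R \<beta> (Bk x y)"
proof -
  define M where "M = \<pi> (r x) y - \<pi> (r y) x + lam *\<^sub>R Bk x y"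
  have argument: "\<pi> (T x) y - \<pi> (T y) x + 1 *\<^sub>R twisted (-t) x y = M"
  proof -
    have "\<pi> (T x) y - \<pi> (T y) x + 1 *\<^sub>R twisted (-t) x y
        = M + t *\<^sub>R (\<pi> (\<beta> x) y - \<pi> (\<beta> y) x) - (2 * t) *\<^sub>R \<pi> (\<beta> x) y"
      unfolding M_def T pm_bracket_def by (simp add: bilinear_simps algebra_simps)
    also have "\<dots> = M"
      using beta_antisym[of y x] by (simp add: algebra_simps flip: scaleR_2)
    finally show ?thesis .
  qed
  have image: "T M = r M + t *\<^sub>R (Bg (r x) (\<beta> y) - Bg (r y) (\<beta> x)) + (t * lam) *\<^sub>R \<beta> (Bk x y)"
    unfolding T M_def using linear_r
    by (simp add: linear_add linear_diff linear_scale bilinear_simps beta_invariant algebra_simps)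
  have bracket: "Bg (T x) (T y) = Bg (r x) (r y) + t *\<^sub>R Bg (r x) (\<beta> y) - t *\<^sub>R Bg (r y) (\<beta> x)
      + Bg (\<beta> x) (\<beta> y)"
    unfolding T using t skew_g[of "\<beta> x" "r y"] by (simp add: bilinear_simps algebra_simps)
  show ?thesis
    unfolding argument M_def[symmetric] image bracket by (simp add: algebra_simps)
qed

end


theorem theorem2p15:
  fixes Bg :: "'g::euclidean_space \<Rightarrow> 'g \<Rightarrow> 'g"
    and Bk :: "'k::euclidean_space \<Rightarrow> 'k \<Rightarrow> 'k"
    and \<pi> :: "'g \<Rightarrow> 'k \<Rightarrow> 'k"
    and rp rm :: "'k \<Rightarrow> 'g"
    and lam \<nu> \<kappa> :: real
  defines "r \<equiv> (\<lambda>x. (1/2) *\<^sub>R (rp x + rm x))"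
    and "\<beta> \<equiv> (\<lambda>x. (1/2) *\<^sub>R (rp x - rm x))"
  assumes "lie_algebra Bg"
    and "g_lie_algebra Bg Bk \<pi>"
    and "linear rp" and "linear rm"
    and "\<nu> \<noteq> 0" and "\<kappa> \<noteq> 0"
    and "antisymmetric_mass \<pi> \<beta> \<nu>"
    and "invariant_mass Bg \<pi> \<beta> \<kappa>"
    and "equivalent_mass Bk \<pi> \<beta> lam"
  shows "lie_algebra (pm_bracket Bk \<pi> \<beta> lam 1)
       \<and> g_lie_algebra Bg (pm_bracket Bk \<pi> \<beta> lam 1) \<pi>
       \<and> lie_algebra (pm_bracket Bk \<pi> \<beta> lam (-1))
       \<and> g_lie_algebra Bg (pm_bracket Bk \<pi> \<beta> lam (-1)) \<pi>
       \<and> (ext_O_operator Bg Bk \<pi> lam \<beta> \<nu> (-1) lam r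
            \<longleftrightarrow> O_operator Bg (pm_bracket Bk \<pi> \<beta> lam (-1)) \<pi> 1 rp)
       \<and> (ext_O_operator Bg Bk \<pi> lam \<beta> \<nu> (-1) (-lam) r
            \<longleftrightarrow> O_operator Bg (pm_bracket Bk \<pi> \<beta> lam 1) \<pi> 1 rm)"
proof -
  have linear_r: "linear r"
    unfolding r_def by (intro linear_compose_scale_right linear_compose_add assms(5,6))
  have linear_beta: "linear \<beta>"
    unfolding \<beta>_def by (intro linear_compose_scale_right linear_compose_sub assms(5,6))
  have A: "\<forall>x y. \<pi> (\<beta> x) y = - \<pi> (\<beta> y) x"
    using assms(9) antisymmetric_mass_nonzero[OF assms(7), of \<pi> \<beta>] by blast
  have I: "\<forall>\<xi> x. \<beta> (\<pi> \<xi> x) = Bg \<xi> (\<beta> x)"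
    using assms(10) invariant_mass_nonzero[OF assms(8), of Bg \<pi> \<beta>] by blast
  have E: "\<forall>x y z. lam *\<^sub>R \<pi> (\<beta> (Bk x y)) z = lam *\<^sub>R Bk (\<pi> (\<beta> x) y) z"
    using assms(11) by (simp add: equivalent_mass_def)
  interpret beta_twist Bg Bk \<pi> \<beta> lam
    by (rule beta_twist.intro[OF assms(3,4) linear_beta]) (use A I E in blast)+
  have masses: "invariant_mass Bg \<pi> \<beta> (-1)" "equivalent_mass Bk \<pi> \<beta> (-lam)"
    using I assms(11) by (simp_all add: invariant_mass_def equivalent_mass_uminus)
  have rp: "rp x = r x + 1 *\<^sub>R \<beta> x" and rm: "rm x = r x + (-1) *\<^sub>R \<beta> x" for x
    unfolding r_def \<beta>_def by (simp_all add: algebra_simps flip: scaleR_add_left)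
  show ?thesis
    using lie_twisted g_lie_twisted linear_r linear_beta assms(5,6,9,11) masses
      O_identity_shifted[OF rp linear_r] O_identity_shifted[OF rm linear_r]
    by (simp add: ext_O_operator_def O_operator_def)
qed

end
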